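(* Let $r\ge2$, $\ell\ge1$, and let $C=(w_1,\dots,w_{2\ell+1})$ be a semi-valid tuple in $\Omega_n$ with $|[w_i,w_{i-1}]|\ge r$ for all $i$ (indices mod $2\ell+1$). Then $H_n^{(r)}(C)$ is $M_1^{(r)}$-saturated.
   Context: $\Omega_n=\{v_0,\dots,v_{n-1}\}$ with cyclic order $v_0<\dots<v_{n-1}<v_0$. For distinct vertices $u,w$, $(u,w)$ is the set of vertices strictly between $u$ and $w$ moving clockwise from $u$ to $w$, and $[u,w]=(u,w)\cup\{u,w\}$. A tuple of distinct vertices $C=(w_1,\dots,w_{2\ell+1})$ is semi-valid if $w_1<w_3<\dots<w_{2\ell+1}<w_2<w_4<\dots<w_{2\ell}<w_1$ in clockwise cyclic order. $H_n^{(r)}(C)=\{e\in\binom{\Omega_n}{r}: e\cap[w_i,w_{i-1}]\neq\emptyset\ \forall i\}$. $M_1^{(r)}$ is the $r$-cgh consisting of two geometrically disjoint edges $\{v_0,\dots,v_{r-1}\},\{v_r,\dots,v_{2r-1}\}$; an $r$-cgh $H$ on $\Omega_n$ contains a copy of it iff there are edges $h_1,h_2\in H$ and vertices $u\neq u'$ with $h_1\subseteq[u,u']$, $h_2\cap[u,u']=\emptyset$. $H$ is $M_1^{(r)}$-saturated if it contains no copy, but $H\cup\{e\}$ contains one for every $e\in\binom{\Omega_n}{r}\setminus H$. *)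

theory Defs
  imports Main
begin

text \<open>The vertex set Omega_n is modelled as {0..<n}, with v_i = i and clockwise
order given by increasing index modulo n.\<close>

definition Omega :: "nat \<Rightarrow> nat set" where
  "Omega n = {0..<n}"

definition cyc_open :: "nat \<Rightarrow> nat \<Rightarrow> nat \<Rightarrow> nat set" where
  "cyc_open n u w = {v \<in> Omega n. 0 < (v + n - u) mod n \<and> (v + n - u) mod n < (w + n - u) mod n}"

definition cyc_closed :: "nat \<Rightarrow> nat \<Rightarrow> nat \<Rightarrow> nat set" where
  "cyc_closed n u w = cyc_open n u w \<union> {u, w}"

definition cyc_ordered :: "nat list \<Rightarrow> bool" where
  "cyc_ordered xs \<longleftrightarrow> (\<exists>k. sorted_wrt (<) (rotate k xs))"

text \<open>A tuple C = (w_1,...,w_{2l+1}) is stored as a list with C!(i-1) = w_i.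
Semi-valid: distinct vertices with w_1 < w_3 < ... < w_{2l+1} < w_2 < w_4 < ... < w_{2l} < w_1.\<close>
definition semi_valid :: "nat \<Rightarrow> nat list \<Rightarrow> bool" where
  "semi_valid n C \<longleftrightarrow> odd (length C) \<and> length C \<ge> 3 \<and> distinct C \<and> set C \<subseteq> Omega n \<and>
     cyc_ordered (map (\<lambda>j. C ! j) ([j\<leftarrow>[0..<length C]. even j] @ [j\<leftarrow>[0..<length C]. odd j]))"

text \<open>The set [w_i, w_{i-1}] with indices mod 2l+1, for 0-based list index j
(so w_{i} = C!j with j = i-1, and w_{i-1} = C!((j + m - 1) mod m)).\<close>
definition seg :: "nat \<Rightarrow> nat list \<Rightarrow> nat \<Rightarrow> nat set" where
  "seg n C j = cyc_closed n (C ! j) (C ! ((j + length C - 1) mod length C))"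

definition H_C :: "nat \<Rightarrow> nat \<Rightarrow> nat list \<Rightarrow> nat set set" where
  "H_C n r C = {e. e \<subseteq> Omega n \<and> card e = r \<and> (\<forall>j < length C. e \<inter> seg n C j \<noteq> {})}"

definition contains_M1 :: "nat \<Rightarrow> nat set set \<Rightarrow> bool" where
  "contains_M1 n H \<longleftrightarrow> (\<exists>h1\<in>H. \<exists>h2\<in>H. \<exists>u\<in>Omega n. \<exists>u'\<in>Omega n. u \<noteq> u' \<and>
      h1 \<subseteq> cyc_closed n u u' \<and> h2 \<inter> cyc_closed n u u' = {})"

definition M1_saturated :: "nat \<Rightarrow> nat \<Rightarrow> nat set set \<Rightarrow> bool" where
  "M1_saturated n r H \<longleftrightarrow> H \<subseteq> {e. e \<subseteq> Omega n \<and> card e = r} \<and> \<not> contains_M1 n H \<and>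
     (\<forall>e. e \<subseteq> Omega n \<and> card e = r \<and> e \<notin> H \<longrightarrow> contains_M1 n (insert e H))"

end

theory Submission
  imports Defs
begin

text \<open>Read clockwise, the vertices of a semi-valid tuple appear as w_1, w_3, ..., w_{2l+1},
w_2, ..., w_{2l}, and in this order w_{i-1} comes l steps after w_i. Hence the segments
[w_i, w_{i-1}] are the 2l+1 arcs spanned by l+1 cyclically consecutive tuple points, and H_n(C)
consists of the r-sets meeting every such arc. Of a tuple point and the point l steps after it,
one lies in each arc, since the tuple points outside an arc form a run of only l. So an r-set
through the two endpoints of an arc A lies inside A and meets every arc, and together with any
r-set missing A it forms a copy of M_1. Conversely, no interval I can meet every arc together with
its complement: the tuple points in I form a run, and either it has more than l points, so some
arc lies inside I, or the arc starting right after the run misses I.\<close>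

lemma mod_less_double:
  fixes x n :: nat
  assumes "x < 2 * n"
  shows "x mod n = (if x < n then x else x - n)"
  using assms by (subst mod_if) (simp add: le_mod_geq)

lemma cyc_closed_eq:
  assumes "a < n" "b < n"
  shows "cyc_closed n a b = (if a \<le> b then {a..b} else {v. v < n \<and> (a \<le> v \<or> v \<le> b)})"
proof -
  have shift: "(v + n - a) mod n = (if v < a then v + n - a else v - a)" if "v < n" for v
  proof -
    have "v + n - a < 2 * n"
      using assms that by linarith
    from mod_less_double[OF this] show ?thesis
      using assms that by auto
  qed
  have cyc_closed_iff: "v \<in> cyc_closed n a b \<longleftrightarrow>
      v = a \<or> v = b \<or> (v < n \<and> 0 < (v + n - a) mod n \<and> (v + n - a) mod n < (b + n - a) mod n)"
    for v
    unfolding cyc_closed_def cyc_open_def Omega_def by auto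
  have mem: "v \<in> cyc_closed n a b \<longleftrightarrow>
      v < n \<and> (if a \<le> b then a \<le> v \<and> v \<le> b else a \<le> v \<or> v \<le> b)" for v
  proof (cases "v < n")
    case True
    show ?thesis
      unfolding cyc_closed_iff shift[OF True] shift[OF assms(2)] using assms True
      by (cases "a \<le> b"; cases "v < a"; cases "b < a"; simp; linarith)
  qed (use assms in \<open>auto simp: cyc_closed_iff\<close>)
  show ?thesis
    using assms(2) by (auto simp: mem set_eq_iff)
qed

lemma mono_on_below_initial_segment:
  fixes q :: "nat \<Rightarrow> 'a::linorder"
  assumes "mono_on {..<m} q"
  shows "\<exists>c\<le>m. \<forall>i<m. q i < a \<longleftrightarrow> i < c"
proof (cases "\<exists>i<m. a \<le> q i")
  case True
  define c where "c = (LEAST i. i < m \<and> a \<le> q i)"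
  have c: "c < m" "a \<le> q c"
    using LeastI_ex[OF True] unfolding c_def by auto
  have "q i < a \<longleftrightarrow> i < c" if "i < m" for i
  proof
    assume "q i < a"
    show "i < c"
    proof (rule ccontr)
      assume "\<not> i < c"
      then have "q c \<le> q i"
        using assms c(1) that by (auto intro: mono_onD)
      with c(2) \<open>q i < a\<close> show False by simp
    qed
  next
    assume "i < c"
    then show "q i < a"
      using not_less_Least that unfolding c_def by fastforce
  qed
  then show ?thesis
    using c by (intro exI[of _ c]) auto
qed (use not_le in auto)

locale cyclic_arcs =
  fixes n l :: nat and q :: "nat \<Rightarrow> nat"
  assumes l_pos: "1 \<le> l"
    and q_strict_mono: "\<And>i j. i < j \<Longrightarrow> j < 2*l+1 \<Longrightarrow> q i < q j"
    and q_less: "\<And>i. i < 2*l+1 \<Longrightarrow> q i < n"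
begin

definition arc :: "nat \<Rightarrow> nat set" where
  "arc p = cyc_closed n (q p) (q ((p+l) mod (2*l+1)))"

definition transversals :: "nat \<Rightarrow> nat set set" where
  "transversals r = {e. e \<subseteq> Omega n \<and> card e = r \<and> (\<forall>p<2*l+1. e \<inter> arc p \<noteq> {})}"

lemma q_less_iff: "i < 2*l+1 \<Longrightarrow> j < 2*l+1 \<Longrightarrow> q i < q j \<longleftrightarrow> i < j"
  by (metis q_strict_mono not_less_iff_gr_or_eq order_less_asym)

lemma q_le_iff: "i < 2*l+1 \<Longrightarrow> j < 2*l+1 \<Longrightarrow> q i \<le> q j \<longleftrightarrow> i \<le> j"
  by (meson not_le q_less_iff)

lemma arc_eq_interval:
  assumes "p \<le> l"
  shows "arc p = {q p .. q (p+l)}"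
proof -
  have "(p+l) mod (2*l+1) = p + l" "q p \<le> q (p+l)"
    using assms q_le_iff by simp_all
  then show ?thesis
    unfolding arc_def using assms q_less by (simp add: cyc_closed_eq)
qed

lemma arc_eq_wrap:
  assumes "l < p" "p < 2*l+1"
  shows "arc p = {v. v < n \<and> (q p \<le> v \<or> v \<le> q (p-l-1))}"
proof -
  have "(p+l) mod (2*l+1) = p - l - 1" "\<not> q p \<le> q (p-l-1)"
    using assms q_le_iff by (simp_all add: mod_less_double)
  then show ?thesis
    unfolding arc_def using assms q_less by (simp add: cyc_closed_eq)
qed

lemma arc_subset_Omega: "p < 2*l+1 \<Longrightarrow> arc p \<subseteq> Omega n"
  unfolding arc_def cyc_closed_def cyc_open_def Omega_def using q_less by auto

lemma point_mem_arc_iff: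
  assumes "i < 2*l+1" "j < 2*l+1"
  shows "q i \<in> arc j \<longleftrightarrow> (i + (2*l+1) - j) mod (2*l+1) \<le> l"
proof (cases "j \<le> l")
  case True
  then show ?thesis
    using assms by (cases "j \<le> i") (auto simp: arc_eq_interval q_le_iff mod_less_double)
next
  case False
  then show ?thesis
    using assms q_less by (cases "j \<le> i") (auto simp: arc_eq_wrap q_le_iff mod_less_double)
qed

lemma point_or_antipode_mem_arc:
  assumes "p < 2*l+1" "j < 2*l+1"
  shows "q p \<in> arc j \<or> q ((p+l) mod (2*l+1)) \<in> arc j"
proof -
  define m where "m = 2*l+1"
  define d where "d = (p + (m - j)) mod m"
  have "((p+l) mod m + m - j) mod m = ((p+l) mod m + (m - j)) mod m"
    using assms(2) unfolding m_def by simp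
  also have "\<dots> = (p + (m - j) + l) mod m"
    by (metis mod_add_left_eq add.commute add.left_commute)
  also have "\<dots> = (d + l) mod m"
    unfolding d_def by (simp add: mod_add_left_eq)
  finally have antipode: "((p+l) mod m + m - j) mod m = (d + l) mod m" .
  have "d < m"
    unfolding d_def m_def by simp
  then have "d \<le> l \<or> (d + l) mod m \<le> l"
    using mod_less_double[of "d + l" m] unfolding m_def by (auto split: if_splits)
  moreover have "q p \<in> arc j \<longleftrightarrow> d \<le> l"
    using point_mem_arc_iff[OF assms] assms(2) unfolding d_def m_def by simp
  moreover have "q ((p+l) mod m) \<in> arc j \<longleftrightarrow> (d + l) mod m \<le> l"
    using point_mem_arc_iff[of "(p+l) mod m" j] assms(2) antipode unfolding m_def by simp
  ultimately show ?thesis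
    unfolding m_def by blast
qed

lemma interval_contains_or_misses_arc:
  assumes "a \<le> b" "b < n"
  obtains p where "p < 2*l+1" "arc p \<subseteq> {a..b} \<or> arc p \<inter> {a..b} = {}"
proof -
  have mono: "mono_on {..<2*l+1} q"
    by (rule mono_onI) (simp add: q_le_iff)
  obtain c where c: "c \<le> 2*l+1" "\<forall>i<2*l+1. q i < a \<longleftrightarrow> i < c"
    using mono_on_below_initial_segment[OF mono] by blast
  obtain d where d: "d \<le> 2*l+1" "\<forall>i<2*l+1. q i < Suc b \<longleftrightarrow> i < d"
    using mono_on_below_initial_segment[OF mono] by blast
  txt \<open>The tuple points in {a..b} are q c, ..., q (d-1). If there are more than l of them,
    arc c lies inside {a..b}; otherwise the arc starting at q d, or arc 0 if d = 2l+1, misses it.\<close>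
  consider "c + l < d" | "d \<le> l" | "l < d" "d < 2*l+1" "d \<le> c + l" | "d = 2*l+1" "d \<le> c + l"
    using d(1) by linarith
  then show ?thesis
  proof cases
    case 1
    then have "a \<le> q c" "q (c+l) \<le> b"
      using c(2)[rule_format, of c] d(2)[rule_format, of "c+l"] d(1) by auto
    then have "arc c \<subseteq> {a..b}"
      using 1 d(1) by (auto simp: arc_eq_interval)
    then show ?thesis
      using that[of c] 1 d(1) by auto
  next
    case 2
    then have "b < q d"
      using d(2)[rule_format, of d] by auto
    then have "arc d \<inter> {a..b} = {}"
      using 2 by (auto simp: arc_eq_interval)
    then show ?thesis
      using that[of d] 2 by auto
  next
    case 3
    then have "b < q d" "q (d-l-1) < a"
      using d(2)[rule_format, of d] c(2)[rule_format, of "d-l-1"] by auto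
    then have "arc d \<inter> {a..b} = {}"
      using 3 assms by (auto simp: arc_eq_wrap)
    then show ?thesis
      using that[of d] 3 by auto
  next
    case 4
    then have "q l < a"
      using c(2)[rule_format, of l] by auto
    then have "arc 0 \<inter> {a..b} = {}"
      by (auto simp: arc_eq_interval)
    then show ?thesis
      using that[of 0] by auto
  qed
qed

lemma transversals_not_separated:
  assumes "a \<le> b" "b < n" "X \<in> transversals r" "Y \<in> transversals r"
    and "X \<subseteq> {a..b}" "Y \<inter> {a..b} = {}"
  shows False
proof -
  obtain p where p: "p < 2*l+1" "arc p \<subseteq> {a..b} \<or> arc p \<inter> {a..b} = {}"
    using interval_contains_or_misses_arc assms(1,2) by blast
  have "X \<inter> arc p \<noteq> {}" "Y \<inter> arc p \<noteq> {}"
    using assms(3,4) p(1) unfolding transversals_def by auto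
  then show False
    using p(2) assms(5,6) by blast
qed

lemma transversals_M1_free: "\<not> contains_M1 n (transversals r)"
proof
  assume "contains_M1 n (transversals r)"
  then obtain h1 h2 u u' where h: "h1 \<in> transversals r" "h2 \<in> transversals r"
      "u \<in> Omega n" "u' \<in> Omega n" "h1 \<subseteq> cyc_closed n u u'" "h2 \<inter> cyc_closed n u u' = {}"
    unfolding contains_M1_def by blast
  have "u < n" "u' < n"
    using h(3,4) by (simp_all add: Omega_def)
  have h2_sub: "h2 \<subseteq> Omega n"
    using h(2) unfolding transversals_def by blast
  show False
  proof (cases "u \<le> u'")
    case True
    then show False
      using transversals_not_separated[OF True \<open>u' < n\<close> h(1,2)] h(5,6) \<open>u < n\<close> \<open>u' < n\<close>
      by (simp add: cyc_closed_eq)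
  next
    case False
    have outside: "h2 \<subseteq> {Suc u'..u-1}"
    proof
      fix v
      assume "v \<in> h2"
      then have "v < n" "v \<notin> cyc_closed n u u'"
        using h2_sub h(6) by (auto simp: Omega_def)
      then show "v \<in> {Suc u'..u-1}"
        using False \<open>u < n\<close> \<open>u' < n\<close> by (auto simp: cyc_closed_eq)
    qed
    have "h2 \<inter> arc 0 \<noteq> {}"
      using h(2) unfolding transversals_def by simp
    then have "h2 \<noteq> {}"
      by blast
    then have "Suc u' \<le> u-1"
      using outside by fastforce
    moreover have "h1 \<inter> {Suc u'..u-1} = {}"
      using h(5) False \<open>u < n\<close> \<open>u' < n\<close> by (auto simp: cyc_closed_eq)
    ultimately show False
      using transversals_not_separated[of "Suc u'" "u-1" h2 r h1] h(1,2) \<open>u < n\<close> outside by linarith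
  qed
qed

lemma arc_endpoints_distinct:
  assumes "p < 2*l+1"
  shows "q p \<noteq> q ((p+l) mod (2*l+1))"
proof -
  have "(p+l) mod (2*l+1) < 2*l+1" "(p+l) mod (2*l+1) \<noteq> p"
    using assms l_pos by (auto simp: mod_less_double split: if_splits)
  then show ?thesis
    using assms q_less_iff by (metis less_irrefl nat_neq_iff)
qed

lemma transversal_inside_arc:
  assumes "2 \<le> r" "p < 2*l+1" "r \<le> card (arc p)"
  obtains h where "h \<in> transversals r" "h \<subseteq> arc p"
proof -
  define x where "x = q p"
  define y where "y = q ((p+l) mod (2*l+1))"
  have "x \<noteq> y"
    unfolding x_def y_def using arc_endpoints_distinct[OF assms(2)] .
  have xy: "x \<in> arc p" "y \<in> arc p"
    unfolding arc_def x_def y_def cyc_closed_def by auto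
  have fin: "finite (arc p)"
    using arc_subset_Omega[OF assms(2)] finite_subset unfolding Omega_def by blast
  then have "r - 2 \<le> card (arc p - {x, y})"
    using xy \<open>x \<noteq> y\<close> assms(3) by (simp add: card_Diff_subset diff_le_mono)
  then obtain S where S: "S \<subseteq> arc p - {x, y}" "card S = r - 2"
    by (rule obtain_subset_with_card_n)
  define h where "h = insert x (insert y S)"
  have "finite S" "x \<notin> S" "y \<notin> S"
    using S(1) fin by (auto intro: finite_subset)
  then have "card h = Suc (Suc (card S))"
    unfolding h_def using \<open>x \<noteq> y\<close> by simp
  then have "card h = r"
    using S(2) assms(1) by simp
  moreover have "h \<subseteq> arc p"
    unfolding h_def using S xy by auto
  moreover have "\<forall>j<2*l+1. h \<inter> arc j \<noteq> {}"
    using point_or_antipode_mem_arc[OF assms(2)] unfolding h_def x_def y_def by blast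
  ultimately show ?thesis
    using that arc_subset_Omega[OF assms(2)] unfolding transversals_def by blast
qed

lemma contains_M1_insert_non_transversal:
  assumes "2 \<le> r" "\<forall>p<2*l+1. r \<le> card (arc p)"
    and "e \<subseteq> Omega n" "card e = r" "e \<notin> transversals r"
  shows "contains_M1 n (insert e (transversals r))"
proof -
  obtain p where p: "p < 2*l+1" "e \<inter> arc p = {}"
    using assms(3-5) unfolding transversals_def by auto
  obtain h where h: "h \<in> transversals r" "h \<subseteq> arc p"
    using transversal_inside_arc assms(1,2) p(1) by blast
  define x where "x = q p"
  define y where "y = q ((p+l) mod (2*l+1))"
  have "x \<noteq> y" "arc p = cyc_closed n x y"
    unfolding x_def y_def arc_def using arc_endpoints_distinct[OF p(1)] by simp_all
  moreover have "x \<in> Omega n" "y \<in> Omega n"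
    unfolding x_def y_def Omega_def using p(1) q_less by simp_all
  ultimately show ?thesis
    unfolding contains_M1_def using h p(2) by (metis insertCI)
qed

theorem M1_saturated_transversals:
  assumes "2 \<le> r" "\<forall>p<2*l+1. r \<le> card (arc p)"
  shows "M1_saturated n r (transversals r)"
  unfolding M1_saturated_def
proof (intro conjI allI impI)
  show "transversals r \<subseteq> {e. e \<subseteq> Omega n \<and> card e = r}"
    unfolding transversals_def by blast
  show "\<not> contains_M1 n (transversals r)"
    by (rule transversals_M1_free)
next
  fix e
  assume "e \<subseteq> Omega n \<and> card e = r \<and> e \<notin> transversals r"
  then show "contains_M1 n (insert e (transversals r))"
    using contains_M1_insert_non_transversal[OF assms] by blast
qed

end

text \<open>Position t (from 0) of the clockwise order w_1, w_3, ..., w_{2l+1}, w_2, ..., w_{2l}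
  holds w_{alt_index l t + 1}.\<close>

definition alt_index :: "nat \<Rightarrow> nat \<Rightarrow> nat" where
  "alt_index l t = (if t \<le> l then 2*t else 2*(t-l) - 1)"

lemma upt_odd_Suc: "[0..<2 * Suc l + 1] = [0..<2*l+1] @ [2*l+1, 2*l+2]"
  by (simp add: upt_Suc)

lemma filter_even_upt_odd: "filter even [0..<2*l+1] = map (\<lambda>i. 2*i) [0..<Suc l]"
  by (induction l) (simp_all add: upt_odd_Suc)

lemma filter_odd_upt_odd: "filter odd [0..<2*l+1] = map (\<lambda>i. 2*i+1) [0..<l]"
  by (induction l) (simp_all add: upt_odd_Suc)

lemma alternating_order_length:
  "length (filter even [0..<2*l+1] @ filter odd [0..<2*l+1]) = 2*l+1"
  unfolding filter_even_upt_odd filter_odd_upt_odd by simp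

lemma alternating_order_nth:
  "t < 2*l+1 \<Longrightarrow> (filter even [0..<2*l+1] @ filter odd [0..<2*l+1]) ! t = alt_index l t"
  unfolding filter_even_upt_odd filter_odd_upt_odd alt_index_def by (auto simp: nth_append)

lemma alt_index_less: "t < 2*l+1 \<Longrightarrow> alt_index l t < 2*l+1"
  unfolding alt_index_def by auto

lemma alt_index_pred:
  "t < 2*l+1 \<Longrightarrow> (alt_index l t + (2*l+1) - 1) mod (2*l+1) = alt_index l ((t+l) mod (2*l+1))"
  unfolding alt_index_def by (auto simp: mod_less_double)

lemma alt_index_surj:
  assumes "j < 2*l+1"
  shows "\<exists>t<2*l+1. alt_index l t = j"
proof (cases "even j")
  case True
  then show ?thesis
    using assms by (intro exI[of _ "j div 2"]) (auto simp: alt_index_def)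
next
  case False
  then show ?thesis
    using assms by (intro exI[of _ "l + (j+1) div 2"]) (auto simp: alt_index_def elim!: oddE)
qed

lemma mod_add_surj:
  fixes m :: nat
  assumes "t < m"
  shows "\<exists>p<m. (k + p) mod m = t"
proof -
  define p where "p = (t + (m - k mod m)) mod m"
  have "k mod m + (t + (m - k mod m)) = t + m"
    using assms mod_less_divisor[of m k] by linarith
  moreover have "(k + p) mod m = (k mod m + (t + (m - k mod m))) mod m"
    unfolding p_def by (simp add: mod_add_left_eq mod_add_right_eq)
  ultimately have "(k + p) mod m = t"
    using assms by simp
  moreover have "p < m"
    unfolding p_def using assms by simp
  ultimately show ?thesis
    by blast
qed

lemma alt_index_rotate_image:
  "(\<lambda>p. alt_index l ((k+p) mod (2*l+1))) ` {..<2*l+1} = {..<2*l+1}"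
proof
  show "(\<lambda>p. alt_index l ((k+p) mod (2*l+1))) ` {..<2*l+1} \<subseteq> {..<2*l+1}"
    using alt_index_less by auto
  show "{..<2*l+1} \<subseteq> (\<lambda>p. alt_index l ((k+p) mod (2*l+1))) ` {..<2*l+1}"
  proof
    fix j
    assume "j \<in> {..<2*l+1}"
    then obtain t where t: "t < 2*l+1" "alt_index l t = j"
      using alt_index_surj by blast
    moreover obtain p where "p < 2*l+1" "(k+p) mod (2*l+1) = t"
      using mod_add_surj[OF t(1)] by blast
    ultimately show "j \<in> (\<lambda>p. alt_index l ((k+p) mod (2*l+1))) ` {..<2*l+1}"
      by auto
  qed
qed

lemma semi_valid_rotation:
  assumes "length C = 2*l+1" "semi_valid n C"
  obtains k where "sorted_wrt (<) (map (\<lambda>i. C ! alt_index l ((k+i) mod (2*l+1))) [0..<2*l+1])"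
proof -
  define L where "L = map (\<lambda>j. C ! j) (filter even [0..<2*l+1] @ filter odd [0..<2*l+1])"
  have "cyc_ordered L"
    using assms unfolding semi_valid_def L_def by auto
  then obtain k where sorted: "sorted_wrt (<) (rotate k L)"
    unfolding cyc_ordered_def by blast
  have len_L: "length L = 2*l+1"
    unfolding L_def by (simp only: length_map alternating_order_length)
  have L_nth: "L ! t = C ! alt_index l t" if "t < 2*l+1" for t
  proof -
    have "t < length (filter even [0..<2*l+1] @ filter odd [0..<2*l+1])"
      using that by (simp only: alternating_order_length)
    then show ?thesis
      by (simp only: L_def nth_map alternating_order_nth[OF that])
  qed
  have "rotate k L = map (\<lambda>i. C ! alt_index l ((k+i) mod (2*l+1))) [0..<2*l+1]"
    using len_L L_nth by (intro nth_equalityI) (simp_all add: nth_rotate del: upt_Suc)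
  then show ?thesis
    using that sorted by simp
qed

lemma semi_valid_segments_are_arcs:
  assumes "1 \<le> l" "length C = 2*l+1" "semi_valid n C"
  obtains q where "cyclic_arcs n l q"
    and "seg n C ` {..<length C} = cyclic_arcs.arc n l q ` {..<2*l+1}"
proof -
  obtain k where sorted: "sorted_wrt (<) (map (\<lambda>i. C ! alt_index l ((k+i) mod (2*l+1))) [0..<2*l+1])"
    using semi_valid_rotation assms(2,3) by blast
  define q where "q i = C ! alt_index l ((k+i) mod (2*l+1))" for i
  have C_Omega: "set C \<subseteq> Omega n"
    using assms(3) unfolding semi_valid_def by blast
  interpret cyclic_arcs n l q
  proof
    show "q i < q j" if "i < j" "j < 2*l+1" for i j
      using sorted that unfolding q_def sorted_wrt_iff_nth_less by (simp del: upt_Suc)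
    show "q i < n" if "i < 2*l+1" for i
    proof -
      have "q i \<in> set C"
        unfolding q_def using alt_index_less[of "(k+i) mod (2*l+1)" l] assms(2) by simp
      then show ?thesis
        using C_Omega by (auto simp: Omega_def)
    qed
  qed (rule assms(1))
  have seg_eq_arc: "seg n C (alt_index l ((k+p) mod (2*l+1))) = arc p" if "p < 2*l+1" for p
  proof -
    define t where "t = (k+p) mod (2*l+1)"
    have "(k + (p+l) mod (2*l+1)) mod (2*l+1) = (t + l) mod (2*l+1)"
      unfolding t_def by (simp add: mod_add_right_eq mod_add_left_eq add.assoc)
    then have "q ((p+l) mod (2*l+1)) = C ! alt_index l ((t+l) mod (2*l+1))"
      unfolding q_def by simp
    moreover have "C ! alt_index l t = q p"
      unfolding q_def t_def ..
    ultimately show ?thesis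
      unfolding seg_def arc_def t_def[symmetric] assms(2)
      using alt_index_pred[of t l] by (simp add: t_def)
  qed
  have "seg n C ` {..<length C} = seg n C ` (\<lambda>p. alt_index l ((k+p) mod (2*l+1))) ` {..<2*l+1}"
    unfolding alt_index_rotate_image assms(2) ..
  also have "\<dots> = arc ` {..<2*l+1}"
    unfolding image_image using seg_eq_arc by (intro image_cong) auto
  finally show ?thesis
    using that cyclic_arcs_axioms by blast
qed

theorem lemma3p3:
  fixes n r l :: nat and C :: "nat list"
  assumes "r \<ge> 2" and "l \<ge> 1"
    and "length C = 2 * l + 1"
    and "semi_valid n C"
    and "\<forall>j < length C. card (seg n C j) \<ge> r"
  shows "M1_saturated n r (H_C n r C)"
proof -
  obtain q where arcs: "cyclic_arcs n l q"
    and segs: "seg n C ` {..<length C} = cyclic_arcs.arc n l q ` {..<2*l+1}"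
    using semi_valid_segments_are_arcs assms(2-4) by blast
  interpret cyclic_arcs n l q
    by (rule arcs)
  have all_segs: "(\<forall>j<length C. P (seg n C j)) \<longleftrightarrow> (\<forall>p<2*l+1. P (arc p))" for P
  proof -
    have "(\<forall>j<length C. P (seg n C j)) \<longleftrightarrow> (\<forall>S\<in>seg n C ` {..<length C}. P S)"
      by auto
    also have "\<dots> \<longleftrightarrow> (\<forall>p<2*l+1. P (arc p))"
      unfolding segs by auto
    finally show ?thesis .
  qed
  have "(\<forall>j<length C. e \<inter> seg n C j \<noteq> {}) \<longleftrightarrow> (\<forall>p<2*l+1. e \<inter> arc p \<noteq> {})" for e
    by (rule all_segs)
  then have "H_C n r C = transversals r"
    unfolding H_C_def transversals_def by simp
  moreover have "\<forall>p<2*l+1. r \<le> card (arc p)"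
    using assms(5) all_segs[of "\<lambda>S. r \<le> card S"] by blast
  ultimately show ?thesis
    using M1_saturated_transversals assms(1) by simp
qed

end
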